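(* Let $(A,B)$ be an $n\times n$ Hermitian pencil, $\mu>0$, and let $(\widetilde A,\widetilde B)=(A+\mu Z_1,B+\mu Z_2)$ with $Z_1,Z_2$ independent samples from $\mathrm{GUE}(n)$. For any $t\ge0$, $$\mathbb{P}\left[\gamma(\widetilde A,\widetilde B)\ge\gamma(A,B)+t\right]\le e^{-\frac{nt^2}{4\mu^2}}.$$
   Context: A pencil $(A,B)$ is Hermitian if $A$ and $B$ are Hermitian; its Crawford number is $\gamma(A,B)=\min_{\|x\|_2=1}|x^H(A+iB)x|$. $\mathrm{GUE}(n)$ is the distribution of $Z=(G+G^H)/\sqrt2$ where $G$ is $n\times n$ with i.i.d. complex Gaussian entries of mean $0$ and variance $1/n$. *)

theory Defs
  imports "HOL-Probability.Probability"
begin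

definition hermitian :: "complex^'n^'n \<Rightarrow> bool" where
  "hermitian M \<longleftrightarrow> (\<forall>i j. M $ i $ j = cnj (M $ j $ i))"

definition qform :: "complex^'n^'n \<Rightarrow> complex^'n \<Rightarrow> complex" where
  "qform M x = (\<Sum>i\<in>UNIV. cnj (x $ i) * (M *v x) $ i)"

definition crawford :: "complex^'n^'n \<Rightarrow> complex^'n^'n \<Rightarrow> real" where
  "crawford A B = Inf {cmod (qform (\<chi> i j. A $ i $ j + \<i> * B $ i $ j) x) | x :: complex^'n. norm x = 1}"

text \<open>Complex Gaussian matrix G with i.i.d. entries of mean 0 and variance 1/n:
  real and imaginary parts are independent N(0, 1/(2n)).  The measure of G.\<close>
definition ginibre :: "(complex^'n^'n) measure" where
  "ginibre = distr
     (PiM (UNIV :: ('n \<times> 'n \<times> bool) set)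
        (\<lambda>_. density lborel (normal_density 0 (sqrt (1 / (2 * real CARD('n)))))))
     borel
     (\<lambda>g. \<chi> i j. Complex (g (i, j, True)) (g (i, j, False)))"

definition GUE :: "(complex^'n^'n) measure" where
  "GUE = distr ginibre borel
     (\<lambda>G. \<chi> i j. (G $ i $ j + cnj (G $ j $ i)) / complex_of_real (sqrt 2))"

end

theory Submission
  imports Defs "HOL-Real_Asymp.Real_Asymp"
begin

(* Let x be a unit vector at which |x^H (A + iB) x| attains the Crawford number. Evaluating the
   perturbed pencil at the same x gives
     gamma(A + mu Z1, B + mu Z2) <= gamma(A, B) + mu |x^H Z1 x + i x^H Z2 x|.
   For Z = (G + G^H)/sqrt 2 ~ GUE(n) the number x^H Z x equals sqrt 2 Re (x^H G x), a linear
   combination of the independent N(0, 1/(2n)) real and imaginary parts of the entries of G whose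
   coefficient vector has norm |x|^2 = 1; so x^H Z x ~ N(0, 1/n). Hence
   n |x^H Z1 x + i x^H Z2 x|^2 is the sum of the squares of two independent standard normals, whose
   tail beyond R is exp(-R/2). *)

section \<open>Gaussian tail of a sum of two squares\<close>

lemma nn_integral_lborel_even_le:
  fixes f :: "real \<Rightarrow> ennreal"
  assumes [measurable]: "f \<in> borel_measurable borel" and even: "\<And>x. f (-x) = f x"
  shows "(\<integral>\<^sup>+x. f x \<partial>lborel) \<le> 2 * (\<integral>\<^sup>+x. f x * indicator {0..} x \<partial>lborel)"
proof -
  have "(\<integral>\<^sup>+x. f x \<partial>lborel) = (\<integral>\<^sup>+x. f x * indicator {0..} x + f x * indicator {..<0} x \<partial>lborel)"
    by (intro nn_integral_cong) (auto split: split_indicator)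
  also have "\<dots> = (\<integral>\<^sup>+x. f x * indicator {0..} x \<partial>lborel) + (\<integral>\<^sup>+x. f x * indicator {..<0} x \<partial>lborel)"
    by (rule nn_integral_add) auto
  also have "(\<integral>\<^sup>+x. f x * indicator {..<0} x \<partial>lborel) = (\<integral>\<^sup>+x. f (- x) * indicator {..<0} (- x) \<partial>lborel)"
    using nn_integral_real_affine[of "\<lambda>x. f x * indicator {..<0} x" "-1" 0] by simp
  also have "\<dots> \<le> (\<integral>\<^sup>+x. f x * indicator {0..} x \<partial>lborel)"
    by (intro nn_integral_mono) (auto simp: even split: split_indicator)
  finally show ?thesis
    by (simp add: mult_2 add_left_mono)
qed

lemma nn_integral_gaussian_radial_tail_le:
  fixes k R :: real
  assumes k: "0 < k" and R: "0 \<le> R"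
  shows "(\<integral>\<^sup>+u. ennreal (\<bar>u\<bar> * exp (- (k * u\<^sup>2) / 2)) * indicator {R..} (k * u\<^sup>2) \<partial>lborel)
    \<le> ennreal (2 * exp (- R / 2) / k)"
proof -
  define b where "b = sqrt (R / k)"
  have b: "0 \<le> b" "k * b\<^sup>2 = R"
    using k R by (simp_all add: b_def)
  have "(\<integral>\<^sup>+u. ennreal (\<bar>u\<bar> * exp (- (k * u\<^sup>2) / 2)) * indicator {R..} (k * u\<^sup>2) \<partial>lborel)
      \<le> 2 * (\<integral>\<^sup>+u. ennreal (\<bar>u\<bar> * exp (- (k * u\<^sup>2) / 2)) * indicator {R..} (k * u\<^sup>2) * indicator {0..} u \<partial>lborel)"
    by (rule nn_integral_lborel_even_le) (auto split: split_indicator)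
  also have "(\<integral>\<^sup>+u. ennreal (\<bar>u\<bar> * exp (- (k * u\<^sup>2) / 2)) * indicator {R..} (k * u\<^sup>2) * indicator {0..} u \<partial>lborel)
      = (\<integral>\<^sup>+u. ennreal (u * exp (- (k * u\<^sup>2) / 2)) * indicator {b..} u \<partial>lborel)"
  proof (intro nn_integral_cong)
    fix u :: real
    have "R \<le> k * u\<^sup>2 \<longleftrightarrow> b \<le> u" if "0 \<le> u"
      using that b k by (auto simp flip: b(2))
    then show "ennreal (\<bar>u\<bar> * exp (- (k * u\<^sup>2) / 2)) * indicator {R..} (k * u\<^sup>2) * indicator {0..} u
        = ennreal (u * exp (- (k * u\<^sup>2) / 2)) * indicator {b..} u"
      using b by (cases "0 \<le> u") (auto split: split_indicator)
  qed
  also have "\<dots> = ennreal (0 - (- exp (- (k * b\<^sup>2) / 2) / k))"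
  proof (rule nn_integral_FTC_atLeast)
    show "((\<lambda>u. - exp (- (k * u\<^sup>2) / 2) / k) \<longlongrightarrow> 0) at_top"
      using k by real_asymp
    fix u assume "b \<le> u"
    then show "0 \<le> u * exp (- (k * u\<^sup>2) / 2)"
      using b by simp
    show "((\<lambda>u. - exp (- (k * u\<^sup>2) / 2) / k) has_real_derivative u * exp (- (k * u\<^sup>2) / 2)) (at u)"
      using k by (auto intro!: derivative_eq_intros simp: field_simps)
  qed auto
  finally show ?thesis
    using b k ennreal_mult[of 2 "exp (- R / 2) / k"] by simp
qed

lemma nn_integral_inverse_1_plus_square_le: "(\<integral>\<^sup>+s. ennreal (1 / (1 + s\<^sup>2)) \<partial>lborel) \<le> ennreal pi"
proof -
  have "(\<integral>\<^sup>+s. ennreal (1 / (1 + s\<^sup>2)) \<partial>lborel) \<le> 2 * (\<integral>\<^sup>+s. ennreal (1 / (1 + s\<^sup>2)) * indicator {0..} s \<partial>lborel)"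
    by (rule nn_integral_lborel_even_le) auto
  also have "(\<integral>\<^sup>+s. ennreal (1 / (1 + s\<^sup>2)) * indicator {0..} s \<partial>lborel) = ennreal (pi / 2 - arctan 0)"
  proof (rule nn_integral_FTC_atLeast)
    fix s :: real
    have "0 < 1 + s\<^sup>2"
      by (simp add: add_pos_nonneg)
    then show "(arctan has_real_derivative 1 / (1 + s\<^sup>2)) (at s)"
      by (auto intro!: derivative_eq_intros simp: field_simps)
  qed (auto intro: tendsto_arctan_at_top)
  finally show ?thesis
    using ennreal_mult[of 2 "pi / 2"] by simp
qed

lemma nn_integral_std_normal_pair_tail_le:
  fixes R :: real
  assumes R: "0 \<le> R"
  shows "(\<integral>\<^sup>+u. \<integral>\<^sup>+v. ennreal (std_normal_density u * std_normal_density v) * indicator {R..} (u\<^sup>2 + v\<^sup>2) \<partial>lborel \<partial>lborel)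
    \<le> ennreal (exp (- R / 2))"
proof -
  define g where "g u s = ennreal (\<bar>u\<bar> * exp (- ((1 + s\<^sup>2) * u\<^sup>2) / 2)) * indicator {R..} ((1 + s\<^sup>2) * u\<^sup>2)"
    for u s :: real
  have [measurable]: "case_prod g \<in> borel_measurable (lborel \<Otimes>\<^sub>M lborel)"
    unfolding g_def by measurable
  (* With v = u s the integrand becomes |u| exp(-(1 + s^2) u^2 / 2) / (2 pi); after Fubini the
     u-integral is elementary and what remains is the integral of 1 / (1 + s^2). *)
  have substitution: "(\<integral>\<^sup>+v. ennreal (std_normal_density u * std_normal_density v) * indicator {R..} (u\<^sup>2 + v\<^sup>2) \<partial>lborel)
      = (\<integral>\<^sup>+s. ennreal (1 / (2 * pi)) * g u s \<partial>lborel)" if "u \<noteq> 0" for u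
  proof -
    have "(\<integral>\<^sup>+v. ennreal (std_normal_density u * std_normal_density v) * indicator {R..} (u\<^sup>2 + v\<^sup>2) \<partial>lborel)
        = ennreal \<bar>u\<bar> * (\<integral>\<^sup>+s. ennreal (std_normal_density u * std_normal_density (u * s)) * indicator {R..} (u\<^sup>2 + (u * s)\<^sup>2) \<partial>lborel)"
      using nn_integral_real_affine[of "\<lambda>v. ennreal (std_normal_density u * std_normal_density v) * indicator {R..} (u\<^sup>2 + v\<^sup>2)" u 0] that
      by simp
    also have "\<dots> = (\<integral>\<^sup>+s. ennreal \<bar>u\<bar> * (ennreal (std_normal_density u * std_normal_density (u * s)) * indicator {R..} (u\<^sup>2 + (u * s)\<^sup>2)) \<partial>lborel)"
      by (rule nn_integral_cmult[symmetric]) measurable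
    also have "\<dots> = (\<integral>\<^sup>+s. ennreal (1 / (2 * pi)) * g u s \<partial>lborel)"
    proof (intro nn_integral_cong)
      fix s :: real
      have "std_normal_density u * std_normal_density (u * s) = exp (- ((1 + s\<^sup>2) * u\<^sup>2) / 2) / (2 * pi)"
        by (simp add: std_normal_density_def field_simps flip: exp_add)
      then have "ennreal \<bar>u\<bar> * ennreal (std_normal_density u * std_normal_density (u * s))
          = ennreal (1 / (2 * pi)) * ennreal (\<bar>u\<bar> * exp (- ((1 + s\<^sup>2) * u\<^sup>2) / 2))"
        by (simp flip: ennreal_mult)
      moreover have "u\<^sup>2 + (u * s)\<^sup>2 = (1 + s\<^sup>2) * u\<^sup>2"
        by (simp add: algebra_simps)
      ultimately show "ennreal \<bar>u\<bar> * (ennreal (std_normal_density u * std_normal_density (u * s)) * indicator {R..} (u\<^sup>2 + (u * s)\<^sup>2))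
          = ennreal (1 / (2 * pi)) * g u s"
        unfolding g_def by (metis mult.assoc)
    qed
    finally show ?thesis .
  qed
  have "(\<integral>\<^sup>+u. \<integral>\<^sup>+v. ennreal (std_normal_density u * std_normal_density v) * indicator {R..} (u\<^sup>2 + v\<^sup>2) \<partial>lborel \<partial>lborel)
      = (\<integral>\<^sup>+u. \<integral>\<^sup>+s. ennreal (1 / (2 * pi)) * g u s \<partial>lborel \<partial>lborel)"
    by (rule nn_integral_cong_AE, rule eventually_mono[OF AE_lborel_singleton[of 0]], rule substitution)
  also have "\<dots> = (\<integral>\<^sup>+s. \<integral>\<^sup>+u. ennreal (1 / (2 * pi)) * g u s \<partial>lborel \<partial>lborel)"
    by (rule lborel_pair.Fubini'[symmetric]) measurable
  also have "\<dots> = (\<integral>\<^sup>+s. ennreal (1 / (2 * pi)) * \<integral>\<^sup>+u. g u s \<partial>lborel \<partial>lborel)"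
    by (intro nn_integral_cong nn_integral_cmult) measurable
  also have "\<dots> \<le> (\<integral>\<^sup>+s. ennreal (1 / (2 * pi)) * ennreal (2 * exp (- R / 2) / (1 + s\<^sup>2)) \<partial>lborel)"
    unfolding g_def
    by (intro nn_integral_mono mult_left_mono nn_integral_gaussian_radial_tail_le R) (auto intro: add_pos_nonneg)
  also have "\<dots> = ennreal (exp (- R / 2) / pi) * (\<integral>\<^sup>+s. ennreal (1 / (1 + s\<^sup>2)) \<partial>lborel)"
    by (subst nn_integral_cmult[symmetric]) (auto intro!: nn_integral_cong simp: ennreal_mult''[symmetric] add_pos_nonneg)
  also have "\<dots> \<le> ennreal (exp (- R / 2) / pi) * ennreal pi"
    by (intro mult_left_mono nn_integral_inverse_1_plus_square_le) simp
  also have "\<dots> = ennreal (exp (- R / 2))"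
    by (simp flip: ennreal_mult)
  finally show ?thesis .
qed

lemma emeasure_std_normal_pair_tail_le:
  fixes R :: real
  assumes "0 \<le> R"
  shows "emeasure (std_normal_distribution \<Otimes>\<^sub>M std_normal_distribution)
      {p. R \<le> (fst p)\<^sup>2 + (snd p)\<^sup>2} \<le> exp (- R / 2)"
proof -
  have sets: "{p. R \<le> (fst p)\<^sup>2 + (snd p)\<^sup>2} \<in> sets (lborel \<Otimes>\<^sub>M lborel)"
    unfolding lborel_prod sets_lborel by (intro borel_closed closed_Collect_le continuous_intros)
  have "std_normal_distribution \<Otimes>\<^sub>M std_normal_distribution
      = density (lborel \<Otimes>\<^sub>M lborel) (\<lambda>(u, v). ennreal (std_normal_density u) * ennreal (std_normal_density v))"
    using prob_space_imp_sigma_finite[OF prob_space_normal_density[of 1 0]]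
    by (intro pair_measure_density sigma_finite_lborel) auto
  then have "emeasure (std_normal_distribution \<Otimes>\<^sub>M std_normal_distribution) {p. R \<le> (fst p)\<^sup>2 + (snd p)\<^sup>2}
      = (\<integral>\<^sup>+p. ennreal (std_normal_density (fst p) * std_normal_density (snd p)) * indicator {R..} ((fst p)\<^sup>2 + (snd p)\<^sup>2) \<partial>(lborel \<Otimes>\<^sub>M lborel))"
    using sets by (auto simp: emeasure_density ennreal_mult'' intro!: nn_integral_cong split: split_indicator)
  also have "\<dots> = (\<integral>\<^sup>+u. \<integral>\<^sup>+v. ennreal (std_normal_density u * std_normal_density v) * indicator {R..} (u\<^sup>2 + v\<^sup>2) \<partial>lborel \<partial>lborel)"
    by (subst lborel.nn_integral_fst[symmetric]) (auto simp: case_prod_beta)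
  also have "\<dots> \<le> exp (- R / 2)"
    by (rule nn_integral_std_normal_pair_tail_le) fact
  finally show ?thesis .
qed

lemma (in prob_space) distributed_normal_pair_tail_le:
  fixes X :: "'a \<Rightarrow> real" and \<sigma> R :: real
  assumes X: "distributed M lborel X (normal_density 0 \<sigma>)" and \<sigma>: "0 < \<sigma>" and R: "0 \<le> R"
  shows "emeasure (M \<Otimes>\<^sub>M M) {p \<in> space (M \<Otimes>\<^sub>M M). R \<le> (X (fst p))\<^sup>2 + (X (snd p))\<^sup>2} \<le> exp (- R / (2 * \<sigma>\<^sup>2))"
proof -
  define Y where "Y x = X x / \<sigma>" for x
  have Y: "distributed M lborel Y std_normal_density"
    using normal_density_affine[OF X \<sigma>, of "1 / \<sigma>" 0] \<sigma> by (simp add: Y_def[abs_def] mult.commute)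
  then have Y_meas: "Y \<in> measurable M lborel" and Y_distr: "distr M lborel Y = std_normal_distribution"
    by (auto simp: distributed_def)
  define S where "S = {p :: real \<times> real. R / \<sigma>\<^sup>2 \<le> (fst p)\<^sup>2 + (snd p)\<^sup>2}"
  have S: "S \<in> sets (lborel \<Otimes>\<^sub>M lborel)"
    unfolding S_def lborel_prod sets_lborel by (intro borel_closed closed_Collect_le continuous_intros)
  have "{p \<in> space (M \<Otimes>\<^sub>M M). R \<le> (X (fst p))\<^sup>2 + (X (snd p))\<^sup>2} = (\<lambda>(x, y). (Y x, Y y)) -` S \<inter> space (M \<Otimes>\<^sub>M M)"
    using \<sigma> by (auto simp: S_def Y_def field_simps)
  also have "emeasure (M \<Otimes>\<^sub>M M) \<dots> = emeasure (distr (M \<Otimes>\<^sub>M M) (lborel \<Otimes>\<^sub>M lborel) (\<lambda>(x, y). (Y x, Y y))) S"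
    using Y_meas S by (simp add: emeasure_distr)
  also have "distr (M \<Otimes>\<^sub>M M) (lborel \<Otimes>\<^sub>M lborel) (\<lambda>(x, y). (Y x, Y y))
      = std_normal_distribution \<Otimes>\<^sub>M std_normal_distribution"
    using pair_measure_distr[OF Y_meas Y_meas] Y_distr
    by (simp add: prob_space_imp_sigma_finite prob_space_normal_density)
  also have "emeasure \<dots> S \<le> exp (- (R / \<sigma>\<^sup>2) / 2)"
    unfolding S_def using R by (intro emeasure_std_normal_pair_tail_le) simp
  also have "- (R / \<sigma>\<^sup>2) / 2 = - R / (2 * \<sigma>\<^sup>2)"
    by simp
  finally show ?thesis .
qed

section \<open>Linear combinations of independent Gaussians\<close>

lemma indep_vars_PiM_components:
  assumes M: "\<And>i. i \<in> I \<Longrightarrow> prob_space (M i)" and I: "I \<noteq> {}"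
  shows "prob_space.indep_vars (PiM I M) M (\<lambda>i \<omega>. \<omega> i) I"
proof -
  interpret prob_space "PiM I M"
    using M by (rule prob_space_PiM)
  have "distr (PiM I M) (PiM I M) (\<lambda>\<omega>. \<lambda>i\<in>I. \<omega> i) = distr (PiM I M) (PiM I M) (\<lambda>\<omega>. \<omega>)"
    by (rule distr_cong[OF refl refl]) (simp add: space_PiM)
  also have "\<dots> = PiM I M"
    by (rule distr_id)
  also have "\<dots> = PiM I (\<lambda>i. distr (PiM I M) (M i) (\<lambda>\<omega>. \<omega> i))"
    by (intro PiM_cong refl distr_PiM_component[symmetric] M)
  finally show ?thesis
    using I by (subst indep_vars_iff_distr_eq_PiM') auto
qed

lemma distributed_PiM_normal_linear_combination:
  fixes I :: "'i set" and c :: "'i \<Rightarrow> real" and \<sigma> :: real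
  assumes I: "finite I" and c: "\<exists>i\<in>I. c i \<noteq> 0" and \<sigma>: "0 < \<sigma>"
  shows "distributed (PiM I (\<lambda>_. density lborel (normal_density 0 \<sigma>))) lborel
    (\<lambda>\<omega>. \<Sum>i\<in>I. c i * \<omega> i) (normal_density 0 (\<sigma> * sqrt (\<Sum>i\<in>I. (c i)\<^sup>2)))"
proof -
  let ?N = "density lborel (normal_density 0 \<sigma>)"
  have N: "prob_space ?N"
    using \<sigma> by (rule prob_space_normal_density)
  interpret prob_space "PiM I (\<lambda>_. ?N)"
    using N by (rule prob_space_PiM)
  define J where "J = {i \<in> I. c i \<noteq> 0}"
  have J: "finite J" "J \<noteq> {}" "J \<subseteq> I"
    using I c by (auto simp: J_def)
  have "indep_vars (\<lambda>_. borel) (\<lambda>i \<omega>. c i * \<omega> i) I"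
    using indep_vars_compose2[OF indep_vars_PiM_components[of I "\<lambda>_. ?N"], where Y="\<lambda>i y. c i * y" and N="\<lambda>_. borel"] N J
    by auto
  then have indep: "indep_vars (\<lambda>_. borel) (\<lambda>i \<omega>. c i * \<omega> i) J"
    using J(3) by (rule indep_vars_subset)
  have component: "distributed (PiM I (\<lambda>_. ?N)) lborel (\<lambda>\<omega>. \<omega> i) (normal_density 0 \<sigma>)" if "i \<in> I" for i
  proof -
    have "distr (PiM I (\<lambda>_. ?N)) lborel (\<lambda>\<omega>. \<omega> i) = distr (PiM I (\<lambda>_. ?N)) ?N (\<lambda>\<omega>. \<omega> i)"
      by (rule distr_cong) auto
    also have "\<dots> = ?N"
      using N that by (rule distr_PiM_component)
    finally show ?thesis
      using that by (auto simp: distributed_def measurable_cong_sets[OF _ sets_lborel])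
  qed
  have scaled: "distributed (PiM I (\<lambda>_. ?N)) lborel (\<lambda>\<omega>. c i * \<omega> i) (normal_density 0 (\<bar>c i\<bar> * \<sigma>))"
    if "i \<in> J" for i
    using normal_density_affine[OF component \<sigma>, of i "c i" 0] that by (simp add: J_def)
  have "distributed (PiM I (\<lambda>_. ?N)) lborel (\<lambda>\<omega>. \<Sum>i\<in>J. c i * \<omega> i)
      (normal_density (\<Sum>i\<in>J. 0) (sqrt (\<Sum>i\<in>J. (\<bar>c i\<bar> * \<sigma>)\<^sup>2)))"
    using J indep scaled \<sigma> by (intro sum_indep_normal) (auto simp: J_def)
  moreover have "(\<lambda>\<omega>. \<Sum>i\<in>J. c i * \<omega> i) = (\<lambda>\<omega>. \<Sum>i\<in>I. c i * \<omega> i)"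
    using J(3) I by (intro ext sum.mono_neutral_left) (auto simp: J_def)
  moreover have "sqrt (\<Sum>i\<in>J. (\<bar>c i\<bar> * \<sigma>)\<^sup>2) = \<sigma> * sqrt (\<Sum>i\<in>I. (c i)\<^sup>2)"
  proof -
    have "(\<Sum>i\<in>J. (\<bar>c i\<bar> * \<sigma>)\<^sup>2) = (\<Sum>i\<in>J. (c i)\<^sup>2) * \<sigma>\<^sup>2"
      by (simp add: power_mult_distrib sum_distrib_right)
    also have "(\<Sum>i\<in>J. (c i)\<^sup>2) = (\<Sum>i\<in>I. (c i)\<^sup>2)"
      using J(3) I by (intro sum.mono_neutral_left) (auto simp: J_def)
    finally show ?thesis
      using \<sigma> by (simp add: real_sqrt_mult)
  qed
  ultimately show ?thesis
    by simp
qed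

section \<open>Quadratic forms and the Crawford number\<close>

lemma qform_eq_sum: "qform M x = (\<Sum>i\<in>UNIV. \<Sum>j\<in>UNIV. cnj (x $ i) * M $ i $ j * x $ j)"
  by (simp add: qform_def matrix_vector_mult_def sum_distrib_left mult.assoc)

lemma qform_add: "qform (M + N) x = qform M x + qform N x"
  by (simp add: qform_eq_sum distrib_left distrib_right sum.distrib)

lemma qform_scaleR: "qform (c *\<^sub>R M) x = of_real c * qform M x"
  unfolding qform_eq_sum by (simp add: sum_distrib_left mult_ac) (simp add: scaleR_conv_of_real)

lemma qform_conjugate_transpose: "qform (\<chi> i j. cnj (M $ j $ i)) x = cnj (qform M x)"
  by (simp add: qform_eq_sum mult_ac) (rule sum.swap)

lemma continuous_on_qform [continuous_intros]:
  "continuous_on S f \<Longrightarrow> continuous_on S g \<Longrightarrow> continuous_on S (\<lambda>s. qform (f s) (g s))"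
  unfolding qform_eq_sum by (intro continuous_intros)

lemma borel_measurable_qform [measurable]: "(\<lambda>M. qform M x) \<in> borel_measurable borel"
  by (intro borel_measurable_continuous_onI continuous_intros)

lemma qform_pencil: "qform (\<chi> i j. A $ i $ j + \<i> * B $ i $ j) x = qform A x + \<i> * qform B x"
  by (simp add: qform_eq_sum distrib_left distrib_right sum.distrib sum_distrib_left mult_ac)

lemma crawford_eq_Inf: "crawford A B = Inf {cmod (qform A x + \<i> * qform B x) | x. norm x = 1}"
  unfolding crawford_def qform_pencil ..

lemma crawford_le: "norm x = 1 \<Longrightarrow> crawford A B \<le> cmod (qform A x + \<i> * qform B x)"
  unfolding crawford_eq_Inf by (rule cInf_lower) (auto intro: bdd_belowI[where m=0])

lemma crawford_attained:
  fixes A B :: "complex^'n^'n"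
  shows "\<exists>x. norm x = 1 \<and> crawford A B = cmod (qform A x + \<i> * qform B x)"
proof -
  define f where "f x = cmod (qform A x + \<i> * qform B x)" for x :: "complex^'n"
  have "compact (f ` sphere 0 1)"
    unfolding f_def by (intro compact_continuous_image continuous_intros) simp
  then obtain x where x: "norm x = 1" "\<And>y. norm y = 1 \<Longrightarrow> f x \<le> f y"
    using compact_attains_inf[of "f ` sphere 0 1"] by fastforce
  have "{cmod (qform A y + \<i> * qform B y) | y. norm y = 1} = f ` sphere 0 1"
    by (auto simp: f_def)
  then have "crawford A B = f x"
    unfolding crawford_eq_Inf using x by (intro cInf_eq_minimum) auto
  then show ?thesis
    using x(1) by (auto simp: f_def)
qed

lemma crawford_perturbation_le:
  "\<exists>x. norm x = 1 \<and> (\<forall>Z1 Z2. crawford (A + \<mu> *\<^sub>R Z1) (B + \<mu> *\<^sub>R Z2)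
      \<le> crawford A B + \<bar>\<mu>\<bar> * cmod (qform Z1 x + \<i> * qform Z2 x))"
proof -
  obtain x where x: "norm x = 1" "crawford A B = cmod (qform A x + \<i> * qform B x)"
    using crawford_attained by blast
  have "crawford (A + \<mu> *\<^sub>R Z1) (B + \<mu> *\<^sub>R Z2) \<le> crawford A B + \<bar>\<mu>\<bar> * cmod (qform Z1 x + \<i> * qform Z2 x)"
    for Z1 Z2
  proof -
    have "crawford (A + \<mu> *\<^sub>R Z1) (B + \<mu> *\<^sub>R Z2) \<le> cmod (qform (A + \<mu> *\<^sub>R Z1) x + \<i> * qform (B + \<mu> *\<^sub>R Z2) x)"
      using x(1) by (rule crawford_le)
    also have "\<dots> = cmod ((qform A x + \<i> * qform B x) + of_real \<mu> * (qform Z1 x + \<i> * qform Z2 x))"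
      by (simp add: qform_add qform_scaleR algebra_simps)
    also have "\<dots> \<le> crawford A B + \<bar>\<mu>\<bar> * cmod (qform Z1 x + \<i> * qform Z2 x)"
      using norm_triangle_ineq[of "qform A x + \<i> * qform B x" "of_real \<mu> * (qform Z1 x + \<i> * qform Z2 x)"] x(2)
      by (simp add: norm_mult)
    finally show ?thesis .
  qed
  then show ?thesis
    using x(1) by blast
qed

section \<open>GUE as a Gaussian vector\<close>

definition hermitization :: "complex^'n^'n \<Rightarrow> complex^'n^'n" where
  "hermitization G = (\<chi> i j. (G $ i $ j + cnj (G $ j $ i)) / complex_of_real (sqrt 2))"

lemma qform_hermitization: "qform (hermitization G) x = of_real (sqrt 2 * Re (qform G x))"
proof -
  have "hermitization G = (1 / sqrt 2) *\<^sub>R (G + (\<chi> i j. cnj (G $ j $ i)))"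
    unfolding hermitization_def
    by (simp add: vec_eq_iff) (simp add: scaleR_conv_of_real divide_inverse mult.commute)
  then show ?thesis
    by (simp add: qform_scaleR qform_add qform_conjugate_transpose complex_add_cnj field_simps flip: of_real_mult)
qed

lemma measurable_hermitization [measurable]: "hermitization \<in> borel_measurable borel"
  unfolding hermitization_def by (intro borel_measurable_continuous_onI continuous_intros) auto

(* Coordinate (i, j, True) is Re G_ij and (i, j, False) is Im G_ij, matching ginibre. *)
definition ginibre_parts :: "('n \<times> 'n \<times> bool \<Rightarrow> real) measure" where
  "ginibre_parts = PiM UNIV (\<lambda>_. density lborel (normal_density 0 (sqrt (1 / (2 * real CARD('n))))))"

definition ginibre_of_parts :: "('n \<times> 'n \<times> bool \<Rightarrow> real) \<Rightarrow> complex^'n^'n" where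
  "ginibre_of_parts \<omega> = (\<chi> i j. Complex (\<omega> (i, j, True)) (\<omega> (i, j, False)))"

lemma prob_space_ginibre_parts: "prob_space (ginibre_parts :: ('n::finite \<times> 'n \<times> bool \<Rightarrow> real) measure)"
  unfolding ginibre_parts_def by (intro prob_space_PiM prob_space_normal_density) simp

lemma sets_ginibre_parts: "sets (ginibre_parts :: ('n::finite \<times> 'n \<times> bool \<Rightarrow> real) measure) = sets borel"
proof -
  have "sets (ginibre_parts :: ('n \<times> 'n \<times> bool \<Rightarrow> real) measure) = sets (PiM UNIV (\<lambda>_. borel :: real measure))"
    unfolding ginibre_parts_def by (rule sets_PiM_cong) auto
  also have "\<dots> = sets borel"
    by (rule sets_PiM_equal_borel)
  finally show ?thesis .
qed

lemma measurable_ginibre_of_parts [measurable]: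
  "(ginibre_of_parts :: ('n::finite \<times> 'n \<times> bool \<Rightarrow> real) \<Rightarrow> complex^'n^'n) \<in> borel_measurable ginibre_parts"
proof -
  have "continuous_on UNIV (ginibre_of_parts :: ('n \<times> 'n \<times> bool \<Rightarrow> real) \<Rightarrow> complex^'n^'n)"
    unfolding ginibre_of_parts_def Complex_eq
    by (intro continuous_intros continuous_on_product_coordinates[THEN continuous_on_compose2[where f="\<lambda>x. x"]]) auto
  then show ?thesis
    by (simp add: measurable_cong_sets[OF sets_ginibre_parts refl] borel_measurable_continuous_onI)
qed

lemma GUE_eq_distr_ginibre_parts:
  "(GUE :: (complex^'n::finite^'n) measure) = distr ginibre_parts borel (\<lambda>\<omega>. hermitization (ginibre_of_parts \<omega>))"
proof -
  have "GUE = distr (distr ginibre_parts borel ginibre_of_parts) borel (hermitization :: complex^'n^'n \<Rightarrow> _)"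
    unfolding GUE_def ginibre_def ginibre_parts_def ginibre_of_parts_def hermitization_def ..
  also have "\<dots> = distr ginibre_parts borel (hermitization \<circ> ginibre_of_parts)"
    by (rule distr_distr) measurable
  finally show ?thesis
    by (simp add: comp_def)
qed

lemma sets_GUE [measurable_cong]: "sets (GUE :: (complex^'n::finite^'n) measure) = sets borel"
  by (simp add: GUE_def)

lemma prob_space_GUE: "prob_space (GUE :: (complex^'n::finite^'n) measure)"
  unfolding GUE_eq_distr_ginibre_parts
  by (intro prob_space.prob_space_distr prob_space_ginibre_parts) measurable

definition qform_coeff :: "complex^'n \<Rightarrow> 'n \<times> 'n \<times> bool \<Rightarrow> real" where
  "qform_coeff x = (\<lambda>(i, j, re). if re then Re (cnj (x $ i) * x $ j) else - Im (cnj (x $ i) * x $ j))"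

lemma sum_UNIV_triple:
  fixes f :: "'n::finite \<times> 'n \<times> bool \<Rightarrow> 'a::comm_monoid_add"
  shows "(\<Sum>k\<in>UNIV. f k) = (\<Sum>i\<in>UNIV. \<Sum>j\<in>UNIV. f (i, j, True) + f (i, j, False))"
proof -
  have "(\<Sum>k\<in>UNIV. f k) = (\<Sum>i\<in>UNIV. \<Sum>(j, b)\<in>UNIV \<times> UNIV. f (i, j, b))"
    by (simp add: sum.cartesian_product)
  also have "\<dots> = (\<Sum>i\<in>UNIV. \<Sum>j\<in>UNIV. \<Sum>b\<in>UNIV. f (i, j, b))"
    by (simp add: sum.cartesian_product)
  finally show ?thesis
    by (simp add: UNIV_bool add.commute)
qed

lemma Re_qform_ginibre_of_parts: "Re (qform (ginibre_of_parts \<omega>) x) = (\<Sum>k\<in>UNIV. qform_coeff x k * \<omega> k)"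
  unfolding qform_eq_sum Re_sum sum_UNIV_triple
  by (intro sum.cong refl) (simp add: ginibre_of_parts_def qform_coeff_def algebra_simps)

lemma sum_qform_coeff_squares: "(\<Sum>k\<in>UNIV. (qform_coeff x k)\<^sup>2) = (norm x)^4"
proof -
  have entry: "(Re (cnj a * b))\<^sup>2 + (Im (cnj a * b))\<^sup>2 = (cmod a)\<^sup>2 * (cmod b)\<^sup>2" for a b :: complex
    by (simp only: cmod_power2[symmetric] norm_mult complex_mod_cnj power_mult_distrib)
  have "(\<Sum>k\<in>UNIV. (qform_coeff x k)\<^sup>2) = (\<Sum>i\<in>UNIV. \<Sum>j\<in>UNIV. (cmod (x $ i))\<^sup>2 * (cmod (x $ j))\<^sup>2)"
    unfolding sum_UNIV_triple
    by (intro sum.cong refl) (simp only: qform_coeff_def prod.case if_True if_False power2_minus entry)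
  also have "\<dots> = (\<Sum>i\<in>UNIV. (cmod (x $ i))\<^sup>2) * (\<Sum>j\<in>UNIV. (cmod (x $ j))\<^sup>2)"
    by (simp add: sum_product)
  also have "(\<Sum>i\<in>UNIV. (cmod (x $ i))\<^sup>2) = (norm x)\<^sup>2"
    by (simp add: norm_vec_def L2_set_def sum_nonneg)
  finally show ?thesis
    by (simp add: power2_eq_square power4_eq_xxxx)
qed

lemma distributed_Re_qform_ginibre_of_parts:
  fixes x :: "complex^'n::finite"
  assumes "norm x = 1"
  shows "distributed ginibre_parts lborel (\<lambda>\<omega>. Re (qform (ginibre_of_parts \<omega>) x))
    (normal_density 0 (sqrt (1 / (2 * real CARD('n)))))"
proof -
  have "(\<Sum>k\<in>UNIV. (qform_coeff x k)\<^sup>2) \<noteq> 0"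
    using sum_qform_coeff_squares[of x] assms by simp
  then have "\<exists>k. qform_coeff x k \<noteq> 0"
    by (metis (no_types, lifting) sum.neutral zero_power2)
  then show ?thesis
    using distributed_PiM_normal_linear_combination[of UNIV "qform_coeff x" "sqrt (1 / (2 * real CARD('n)))"]
    by (simp add: ginibre_parts_def Re_qform_ginibre_of_parts sum_qform_coeff_squares assms)
qed

lemma GUE_pair_qform_tail_le:
  fixes x :: "complex^'n::finite" and r :: real
  assumes x: "norm x = 1" and r: "0 \<le> r"
  shows "measure (GUE \<Otimes>\<^sub>M GUE) {p \<in> space (GUE \<Otimes>\<^sub>M GUE). r \<le> cmod (qform (fst p) x + \<i> * qform (snd p) x)}
    \<le> exp (- real CARD('n) * r\<^sup>2 / 2)"
proof -
  let ?P = "ginibre_parts :: ('n \<times> 'n \<times> bool \<Rightarrow> real) measure"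
  let ?H = "\<lambda>\<omega>. hermitization (ginibre_of_parts \<omega>)"
  let ?Q = "\<lambda>\<omega>. Re (qform (ginibre_of_parts \<omega>) x)"
  define T where "T = {p \<in> space (GUE \<Otimes>\<^sub>M GUE). r \<le> cmod (qform (fst p) x + \<i> * qform (snd p) x)}"
  interpret P: prob_space ?P
    by (rule prob_space_ginibre_parts)
  interpret GG: prob_space "GUE \<Otimes>\<^sub>M GUE :: ((complex^'n^'n) \<times> (complex^'n^'n)) measure"
    by (intro prob_space_pair prob_space_GUE)
  have "T \<in> sets (GUE \<Otimes>\<^sub>M GUE)"
    unfolding T_def by measurable
  then have T: "T \<in> sets (borel \<Otimes>\<^sub>M borel)"
    by (simp add: sets_pair_measure_cong[OF sets_GUE sets_GUE])
  have "GUE \<Otimes>\<^sub>M GUE = distr (?P \<Otimes>\<^sub>M ?P) (borel \<Otimes>\<^sub>M borel) (\<lambda>(\<omega>, \<omega>'). (?H \<omega>, ?H \<omega>'))"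
    unfolding GUE_eq_distr_ginibre_parts
    by (intro pair_measure_distr prob_space_imp_sigma_finite P.prob_space_distr) measurable
  then have "emeasure (GUE \<Otimes>\<^sub>M GUE) T = emeasure (?P \<Otimes>\<^sub>M ?P) ((\<lambda>(\<omega>, \<omega>'). (?H \<omega>, ?H \<omega>')) -` T \<inter> space (?P \<Otimes>\<^sub>M ?P))"
    using T by (simp add: emeasure_distr)
  also have "(\<lambda>(\<omega>, \<omega>'). (?H \<omega>, ?H \<omega>')) -` T \<inter> space (?P \<Otimes>\<^sub>M ?P)
      = {p \<in> space (?P \<Otimes>\<^sub>M ?P). r\<^sup>2 / 2 \<le> (?Q (fst p))\<^sup>2 + (?Q (snd p))\<^sup>2}"
  proof -
    have "r \<le> cmod (of_real (sqrt 2 * a) + \<i> * of_real (sqrt 2 * b)) \<longleftrightarrow> r\<^sup>2 / 2 \<le> a\<^sup>2 + b\<^sup>2" for a b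
    proof -
      have "cmod (of_real (sqrt 2 * a) + \<i> * of_real (sqrt 2 * b)) = sqrt (2 * (a\<^sup>2 + b\<^sup>2))"
        by (simp add: cmod_def power_mult_distrib)
      moreover have "r \<le> sqrt (2 * (a\<^sup>2 + b\<^sup>2)) \<longleftrightarrow> r\<^sup>2 \<le> 2 * (a\<^sup>2 + b\<^sup>2)"
        using r real_le_rsqrt sqrt_ge_absD by (metis abs_of_nonneg)
      ultimately show ?thesis
        by (simp add: field_simps)
    qed
    then show ?thesis
      by (auto simp: T_def space_pair_measure qform_hermitization sets_eq_imp_space_eq[OF sets_GUE])
  qed
  also have "emeasure (?P \<Otimes>\<^sub>M ?P) \<dots> \<le> exp (- (r\<^sup>2 / 2) / (2 * (sqrt (1 / (2 * real CARD('n))))\<^sup>2))"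
    using distributed_Re_qform_ginibre_of_parts[OF x] r by (intro P.distributed_normal_pair_tail_le) simp_all
  also have "- (r\<^sup>2 / 2) / (2 * (sqrt (1 / (2 * real CARD('n))))\<^sup>2) = - real CARD('n) * r\<^sup>2 / 2"
    by simp
  finally show ?thesis
    unfolding T_def by (simp add: GG.emeasure_eq_measure)
qed

theorem proposition3p12:
  fixes A B :: "complex^'n^'n" and \<mu> t :: real
  assumes "hermitian A" and "hermitian B" and "\<mu> > 0" and "t \<ge> 0"
  shows "measure ((GUE :: (complex^'n^'n) measure) \<Otimes>\<^sub>M (GUE :: (complex^'n^'n) measure))
           {(Z1, Z2) \<in> space (GUE \<Otimes>\<^sub>M GUE).
              crawford (A + \<mu> *\<^sub>R Z1) (B + \<mu> *\<^sub>R Z2) \<ge> crawford A B + t}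
         \<le> exp (- (real CARD('n) * t\<^sup>2) / (4 * \<mu>\<^sup>2))"
proof -
  obtain x where x: "norm x = 1" and perturbation: "\<And>Z1 Z2. crawford (A + \<mu> *\<^sub>R Z1) (B + \<mu> *\<^sub>R Z2)
      \<le> crawford A B + \<bar>\<mu>\<bar> * cmod (qform Z1 x + \<i> * qform Z2 x)"
    using crawford_perturbation_le by blast
  interpret prob_space "GUE \<Otimes>\<^sub>M GUE :: ((complex^'n^'n) \<times> (complex^'n^'n)) measure"
    by (intro prob_space_pair prob_space_GUE)
  let ?E = "{(Z1, Z2) \<in> space (GUE \<Otimes>\<^sub>M GUE). crawford (A + \<mu> *\<^sub>R Z1) (B + \<mu> *\<^sub>R Z2) \<ge> crawford A B + t}"
  let ?T = "{p \<in> space (GUE \<Otimes>\<^sub>M GUE). t / \<mu> \<le> cmod (qform (fst p) x + \<i> * qform (snd p) x)}"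
  have "?E \<subseteq> ?T"
  proof safe
    fix Z1 Z2 assume "crawford A B + t \<le> crawford (A + \<mu> *\<^sub>R Z1) (B + \<mu> *\<^sub>R Z2)"
    then have "t \<le> \<mu> * cmod (qform Z1 x + \<i> * qform Z2 x)"
      using perturbation[of Z1 Z2] \<open>\<mu> > 0\<close> by simp
    then show "t / \<mu> \<le> cmod (qform (fst (Z1, Z2)) x + \<i> * qform (snd (Z1, Z2)) x)"
      using \<open>\<mu> > 0\<close> by (simp add: pos_divide_le_eq mult.commute)
  qed
  then have "measure (GUE \<Otimes>\<^sub>M GUE) ?E \<le> measure (GUE \<Otimes>\<^sub>M GUE) ?T"
    by (rule finite_measure_mono) measurable
  also have "\<dots> \<le> exp (- real CARD('n) * (t / \<mu>)\<^sup>2 / 2)"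
    using x \<open>t \<ge> 0\<close> \<open>\<mu> > 0\<close> by (intro GUE_pair_qform_tail_le) auto
  also have "\<dots> \<le> exp (- (real CARD('n) * t\<^sup>2) / (4 * \<mu>\<^sup>2))"
    using \<open>\<mu> > 0\<close> by (simp add: field_simps)
  finally show ?thesis .
qed

end
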